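(* Let $U$ be any consistent theory (of arbitrary complexity of its axiom set) in the language of arithmetic that extends Robinson's theory $\mathsf{R}$ (the Tarski–Mostowski–Robinson theory). Then there is no formula $\rho(x)$ satisfying both of the following: (Independence) for every sentence $\phi$, if $U+\phi$ is consistent, then both $U+\phi+\rho(\ulcorner\phi\urcorner)$ and $U+\phi+\neg\rho(\ulcorner\phi\urcorner)$ are consistent; (Extensionality) for all sentences $\phi,\psi$, if $U\vdash\phi\leftrightarrow\psi$, then $U\vdash\rho(\ulcorner\phi\urcorner)\leftrightarrow\rho(\ulcorner\psi\urcorner)$.
   Context: $\ulcorner\phi\urcorner$ denotes the numeral of the Gödel number of $\phi$. *)

theory Defs
  imports Main "HOL-Library.Nat_Bijection"
begin

datatype trm = Var nat | Zero | S trm | Plus trm trm | Times trm trm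

datatype fm = Eq trm trm | Bot | Imp fm fm | All fm
  \<comment> \<open>\<open>All \<phi>\<close> binds the de Bruijn index 0 in \<open>\<phi>\<close>\<close>

definition Neg :: "fm \<Rightarrow> fm" where "Neg \<phi> = Imp \<phi> Bot"
definition Or :: "fm \<Rightarrow> fm \<Rightarrow> fm" where "Or \<phi> \<psi> = Imp (Neg \<phi>) \<psi>"
definition And :: "fm \<Rightarrow> fm \<Rightarrow> fm" where "And \<phi> \<psi> = Neg (Imp \<phi> (Neg \<psi>))"
definition Iff :: "fm \<Rightarrow> fm \<Rightarrow> fm" where "Iff \<phi> \<psi> = And (Imp \<phi> \<psi>) (Imp \<psi> \<phi>)"
definition Ex :: "fm \<Rightarrow> fm" where "Ex \<phi> = Neg (All (Neg \<phi>))"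

primrec liftt :: "nat \<Rightarrow> trm \<Rightarrow> trm" where
  "liftt k (Var i) = (if i < k then Var i else Var (Suc i))"
| "liftt k Zero = Zero"
| "liftt k (S t) = S (liftt k t)"
| "liftt k (Plus s t) = Plus (liftt k s) (liftt k t)"
| "liftt k (Times s t) = Times (liftt k s) (liftt k t)"

primrec liftf :: "nat \<Rightarrow> fm \<Rightarrow> fm" where
  "liftf k (Eq s t) = Eq (liftt k s) (liftt k t)"
| "liftf k Bot = Bot"
| "liftf k (Imp \<phi> \<psi>) = Imp (liftf k \<phi>) (liftf k \<psi>)"
| "liftf k (All \<phi>) = All (liftf (Suc k) \<phi>)"

primrec substt :: "nat \<Rightarrow> trm \<Rightarrow> trm \<Rightarrow> trm" where
  "substt k u (Var i) = (if i < k then Var i else if i = k then u else Var (i - 1))"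
| "substt k u Zero = Zero"
| "substt k u (S t) = S (substt k u t)"
| "substt k u (Plus s t) = Plus (substt k u s) (substt k u t)"
| "substt k u (Times s t) = Times (substt k u s) (substt k u t)"

primrec substf :: "nat \<Rightarrow> trm \<Rightarrow> fm \<Rightarrow> fm" where
  "substf k u (Eq s t) = Eq (substt k u s) (substt k u t)"
| "substf k u Bot = Bot"
| "substf k u (Imp \<phi> \<psi>) = Imp (substf k u \<phi>) (substf k u \<psi>)"
| "substf k u (All \<phi>) = All (substf (Suc k) (liftt 0 u) \<phi>)"

primrec closedt :: "nat \<Rightarrow> trm \<Rightarrow> bool" where
  "closedt k (Var i) = (i < k)"
| "closedt k Zero = True"
| "closedt k (S t) = closedt k t"
| "closedt k (Plus s t) = (closedt k s \<and> closedt k t)"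
| "closedt k (Times s t) = (closedt k s \<and> closedt k t)"

primrec closedf :: "nat \<Rightarrow> fm \<Rightarrow> bool" where
  "closedf k (Eq s t) = (closedt k s \<and> closedt k t)"
| "closedf k Bot = True"
| "closedf k (Imp \<phi> \<psi>) = (closedf k \<phi> \<and> closedf k \<psi>)"
| "closedf k (All \<phi>) = closedf (Suc k) \<phi>"

definition sentence :: "fm \<Rightarrow> bool" where "sentence \<phi> = closedf 0 \<phi>"

primrec num :: "nat \<Rightarrow> trm" where
  "num 0 = Zero"
| "num (Suc n) = S (num n)"

primrec code_trm :: "trm \<Rightarrow> nat" where
  "code_trm (Var i) = prod_encode (0, i)"
| "code_trm Zero = prod_encode (1, 0)"
| "code_trm (S t) = prod_encode (2, code_trm t)"
| "code_trm (Plus s t) = prod_encode (3, prod_encode (code_trm s, code_trm t))"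
| "code_trm (Times s t) = prod_encode (4, prod_encode (code_trm s, code_trm t))"

primrec code_fm :: "fm \<Rightarrow> nat" where
  "code_fm (Eq s t) = prod_encode (0, prod_encode (code_trm s, code_trm t))"
| "code_fm Bot = prod_encode (1, 0)"
| "code_fm (Imp \<phi> \<psi>) = prod_encode (2, prod_encode (code_fm \<phi>, code_fm \<psi>))"
| "code_fm (All \<phi>) = prod_encode (3, code_fm \<phi>)"

definition quote :: "fm \<Rightarrow> trm" where "quote \<phi> = num (code_fm \<phi>)"

text \<open>For a formula \<open>\<rho>(x)\<close> whose only free variable is index 0: \<open>\<rho>(\<ulcorner>\<phi>\<urcorner>)\<close>.\<close>
definition inst :: "fm \<Rightarrow> fm \<Rightarrow> fm" where "inst \<rho> \<phi> = substf 0 (quote \<phi>) \<rho>"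

inductive prv :: "fm set \<Rightarrow> fm \<Rightarrow> bool" for T :: "fm set" where
  Ax: "\<phi> \<in> T \<Longrightarrow> prv T \<phi>"
| K: "prv T (Imp \<phi> (Imp \<psi> \<phi>))"
| Sd: "prv T (Imp (Imp \<phi> (Imp \<psi> \<chi>)) (Imp (Imp \<phi> \<psi>) (Imp \<phi> \<chi>)))"
| DN: "prv T (Imp (Neg (Neg \<phi>)) \<phi>)"
| AllE: "prv T (Imp (All \<phi>) (substf 0 t \<phi>))"
| AllI: "prv T (Imp (All (Imp (liftf 0 \<psi>) \<phi>)) (Imp \<psi> (All \<phi>)))"
| Refl: "prv T (Eq t t)"
| EqSub: "prv T (Imp (Eq s t) (Imp (substf 0 s \<phi>) (substf 0 t \<phi>)))"
| MP: "prv T (Imp \<phi> \<psi>) \<Longrightarrow> prv T \<phi> \<Longrightarrow> prv T \<psi>"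
| Gen: "prv T \<phi> \<Longrightarrow> prv T (All \<phi>)"

definition consistent :: "fm set \<Rightarrow> bool" where
  "consistent T = (\<not> prv T Bot)"

definition Le :: "trm \<Rightarrow> trm \<Rightarrow> fm" where
  "Le s t = Ex (Eq (Plus (Var 0) (liftt 0 s)) (liftt 0 t))"

definition BigOr :: "fm list \<Rightarrow> fm" where "BigOr xs = foldr Or xs Bot"

definition R_axioms :: "fm set" where
  "R_axioms =
     {Eq (Plus (num n) (num m)) (num (n + m)) | n m. True}
   \<union> {Eq (Times (num n) (num m)) (num (n * m)) | n m. True}
   \<union> {Neg (Eq (num n) (num m)) | n m. n \<noteq> m}
   \<union> {All (Imp (Le (Var 0) (num n)) (BigOr (map (\<lambda>i. Eq (Var 0) (num i)) [0..<Suc n]))) | n. True}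
   \<union> {All (Or (Le (Var 0) (num n)) (Le (num n) (Var 0))) | n. True}"

end

theory Submission
  imports Defs "HOL-Number_Theory.Cong"
begin

(* Suppose \<rho> were independent and extensional over U. The diagonal lemma, which holds in
   every extension of R, gives sentences \<theta>1 and \<theta>2 such that U proves
   \<theta>1 \<leftrightarrow> \<not>\<rho>(\<ulcorner>\<theta>1\<urcorner>) and \<theta>2 \<leftrightarrow> \<not>\<not>\<rho>(\<ulcorner>\<theta>2\<urcorner>). Independence refutes both: if U + \<theta>1
   were consistent, so would be U + \<theta>1 + \<rho>(\<ulcorner>\<theta>1\<urcorner>), which proves \<not>\<theta>1; dually for \<theta>2
   with \<not>\<rho>. Hence U proves \<rho>(\<ulcorner>\<theta>1\<urcorner>) and \<not>\<rho>(\<ulcorner>\<theta>2\<urcorner>), and as both \<theta>i are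
   U-equivalent to \<bottom>, extensionality turns these into U \<turnstile> \<rho>(\<ulcorner>\<bottom>\<urcorner>) and U \<turnstile> \<not>\<rho>(\<ulcorner>\<bottom>\<urcorner>).

   For the diagonal lemma over R, the map from the code of G to the code of
   \<forall>x (x = \<ulcorner>G\<urcorner> \<longrightarrow> G) gets a \<Delta>0 graph via Goedel's \<beta>-function. R decides closed
   \<Delta>0 formulas, and a minimisation trick makes the graph provably single-valued. *)

section \<open>Lifting, substitution and closedness\<close>

lemma liftt_closed: "closedt k t \<Longrightarrow> k \<le> j \<Longrightarrow> liftt j t = t"
  by (induction t) auto
lemma liftf_closed: "closedf k \<phi> \<Longrightarrow> k \<le> j \<Longrightarrow> liftf j \<phi> = \<phi>"
  by (induction \<phi> arbitrary: k j) (auto simp: liftt_closed)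
lemma substt_closed: "closedt k t \<Longrightarrow> k \<le> j \<Longrightarrow> substt j u t = t"
  by (induction t) auto
lemma substf_closed: "closedf k \<phi> \<Longrightarrow> k \<le> j \<Longrightarrow> substf j u \<phi> = \<phi>"
  by (induction \<phi> arbitrary: k j u) (auto simp: substt_closed)

lemma closedt_mono: "closedt k t \<Longrightarrow> k \<le> j \<Longrightarrow> closedt j t"
  by (induction t) auto
lemma closedf_mono: "closedf k \<phi> \<Longrightarrow> k \<le> j \<Longrightarrow> closedf j \<phi>"
  by (induction \<phi> arbitrary: k j) (auto intro: closedt_mono)

lemma closedt_num[simp]: "closedt k (num n)"
  by (induction n) auto
lemma liftt_num[simp]: "liftt k (num n) = num n"
  by (rule liftt_closed[of 0]) auto
lemma substt_num[simp]: "substt k u (num n) = num n"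
  by (rule substt_closed[of 0]) auto

lemma substt_liftt[simp]: "substt k u (liftt k t) = t"
  by (induction t) auto
lemma substt_liftt_comm: "substt (Suc k) (liftt 0 u) (liftt 0 t) = liftt 0 (substt k u t)"
  by (induction t) auto

lemma closedt_liftt0[simp]: "closedt (Suc k) (liftt 0 t) = closedt k t"
  by (induction t) auto

lemma closedt_substt: "closedt (Suc n) t \<Longrightarrow> k \<le> n \<Longrightarrow> closedt n u \<Longrightarrow> closedt n (substt k u t)"
  by (induction t) auto
lemma closedf_substf: "closedf (Suc n) \<phi> \<Longrightarrow> k \<le> n \<Longrightarrow> closedt n u \<Longrightarrow> closedf n (substf k u \<phi>)"
  by (induction \<phi> arbitrary: n k u) (auto simp: closedt_substt)

lemma substt_Var_id: "closedt (Suc k) t \<Longrightarrow> substt k (Var k) t = t"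
  by (induction t) auto
lemma substf_Var_id: "closedf (Suc k) \<phi> \<Longrightarrow> substf k (Var k) \<phi> = \<phi>"
  by (induction \<phi> arbitrary: k) (auto simp: substt_Var_id)

lemma substf_Neg[simp]: "substf k u (Neg \<phi>) = Neg (substf k u \<phi>)"
  by (simp add: Neg_def)
lemma substf_Or[simp]: "substf k u (Or \<phi> \<psi>) = Or (substf k u \<phi>) (substf k u \<psi>)"
  by (simp add: Or_def)
lemma substf_And[simp]: "substf k u (And \<phi> \<psi>) = And (substf k u \<phi>) (substf k u \<psi>)"
  by (simp add: And_def)
lemma substf_Ex[simp]: "substf k u (Ex \<phi>) = Ex (substf (Suc k) (liftt 0 u) \<phi>)"
  by (simp add: Ex_def)
lemma substf_Le[simp]: "substf k u (Le s t) = Le (substt k u s) (substt k u t)"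
  by (simp add: Le_def substt_liftt_comm)
lemma substf_BigOr[simp]: "substf k u (BigOr xs) = BigOr (map (substf k u) xs)"
  by (induction xs) (auto simp: BigOr_def)
lemma liftf_Neg[simp]: "liftf k (Neg \<phi>) = Neg (liftf k \<phi>)"
  by (simp add: Neg_def)

lemma closedf_Neg[simp]: "closedf k (Neg \<phi>) = closedf k \<phi>"
  by (simp add: Neg_def)
lemma closedf_Or[simp]: "closedf k (Or \<phi> \<psi>) = (closedf k \<phi> \<and> closedf k \<psi>)"
  by (simp add: Or_def)
lemma closedf_And[simp]: "closedf k (And \<phi> \<psi>) = (closedf k \<phi> \<and> closedf k \<psi>)"
  by (simp add: And_def)
lemma closedf_Ex[simp]: "closedf k (Ex \<phi>) = closedf (Suc k) \<phi>"
  by (simp add: Ex_def)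
lemma closedf_Le[simp]: "closedf k (Le s t) = (closedt k s \<and> closedt k t)"
  by (simp add: Le_def)
section \<open>The standard model\<close>

definition cons_env :: "nat \<Rightarrow> (nat \<Rightarrow> nat) \<Rightarrow> nat \<Rightarrow> nat" (infixr "##" 65) where
  "x ## e = (\<lambda>i. case i of 0 \<Rightarrow> x | Suc j \<Rightarrow> e j)"

lemma cons_env_simps[simp]: "(x ## e) 0 = x" "(x ## e) (Suc i) = e i"
  by (auto simp: cons_env_def)
lemma cons_env_numeral[simp]: "(x ## e) (numeral n) = e (pred_numeral n)"
  by (simp add: numeral_eq_Suc)

primrec evalt :: "(nat \<Rightarrow> nat) \<Rightarrow> trm \<Rightarrow> nat" where
  "evalt e (Var i) = e i"
| "evalt e Zero = 0"
| "evalt e (S t) = Suc (evalt e t)"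
| "evalt e (Plus s t) = evalt e s + evalt e t"
| "evalt e (Times s t) = evalt e s * evalt e t"

primrec evalf :: "(nat \<Rightarrow> nat) \<Rightarrow> fm \<Rightarrow> bool" where
  "evalf e (Eq s t) = (evalt e s = evalt e t)"
| "evalf e Bot = False"
| "evalf e (Imp \<phi> \<psi>) = (evalf e \<phi> \<longrightarrow> evalf e \<psi>)"
| "evalf e (All \<phi>) = (\<forall>x. evalf (x ## e) \<phi>)"

definition insenv :: "nat \<Rightarrow> nat \<Rightarrow> (nat \<Rightarrow> nat) \<Rightarrow> nat \<Rightarrow> nat" where
  "insenv k a e = (\<lambda>i. if i < k then e i else if i = k then a else e (i - 1))"

lemma insenv_0[simp]: "insenv 0 a e = a ## e"
  by (auto simp: insenv_def cons_env_def split: nat.splits)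
lemma insenv_cons: "insenv (Suc k) a (x ## e) = x ## insenv k a e"
  by (auto simp: insenv_def cons_env_def split: nat.splits)

lemma evalt_liftt0[simp]: "evalt (x ## e) (liftt 0 t) = evalt e t"
  by (induction t) auto

lemma evalt_substt: "evalt e (substt k u t) = evalt (insenv k (evalt e u) e) t"
  by (induction t) (auto simp: insenv_def)
lemma evalf_substf: "evalf e (substf k u \<phi>) = evalf (insenv k (evalt e u) e) \<phi>"
  by (induction \<phi> arbitrary: k u e) (auto simp: evalt_substt insenv_cons)

lemma evalt_num[simp]: "evalt e (num n) = n"
  by (induction n) auto
lemma evalf_Neg[simp]: "evalf e (Neg \<phi>) = (\<not> evalf e \<phi>)"
  by (simp add: Neg_def)
lemma evalf_Or[simp]: "evalf e (Or \<phi> \<psi>) = (evalf e \<phi> \<or> evalf e \<psi>)"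
  by (auto simp add: Or_def)
lemma evalf_And[simp]: "evalf e (And \<phi> \<psi>) = (evalf e \<phi> \<and> evalf e \<psi>)"
  by (auto simp add: And_def)
lemma evalf_Ex[simp]: "evalf e (Ex \<phi>) = (\<exists>x. evalf (x ## e) \<phi>)"
  by (auto simp add: Ex_def)
lemma evalf_Le[simp]: "evalf e (Le s t) = (evalt e s \<le> evalt e t)"
  by (auto simp add: Le_def le_iff_add) (metis add.commute)
section \<open>Tautologies\<close>

inductive pprv :: "fm set \<Rightarrow> fm \<Rightarrow> bool" for G :: "fm set" where
  pAx: "\<phi> \<in> G \<Longrightarrow> pprv G \<phi>"
| pK: "pprv G (Imp \<phi> (Imp \<psi> \<phi>))"
| pS: "pprv G (Imp (Imp \<phi> (Imp \<psi> \<chi>)) (Imp (Imp \<phi> \<psi>) (Imp \<phi> \<chi>)))"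
| pDN: "pprv G (Imp (Neg (Neg \<phi>)) \<phi>)"
| pMP: "pprv G (Imp \<phi> \<psi>) \<Longrightarrow> pprv G \<phi> \<Longrightarrow> pprv G \<psi>"

lemma pprv_mono: "pprv G \<phi> \<Longrightarrow> G \<subseteq> H \<Longrightarrow> pprv H \<phi>"
proof (induction rule: pprv.induct)
  case (pMP a b) then show ?case using pprv.pMP by blast
qed (auto intro: pprv.pAx pprv.pK pprv.pS pprv.pDN)

lemma pprv_Imp_refl: "pprv G (Imp \<phi> \<phi>)"
  using pMP[OF pMP[OF pS pK] pK[where \<psi>=\<phi>]] .

lemma pprv_deduction: "pprv (insert \<phi> G) \<psi> \<Longrightarrow> pprv G (Imp \<phi> \<psi>)"
proof (induction rule: pprv.induct)
  case (pAx \<chi>) then show ?case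
  proof (cases "\<chi> = \<phi>")
    case True then show ?thesis using pprv_Imp_refl by simp
  next
    case False then have "\<chi> \<in> G" using pAx by simp
    then show ?thesis using pprv.pMP[OF pprv.pK pprv.pAx] by blast
  qed
next
  case (pMP a b) then show ?case using pprv.pMP[OF pprv.pMP[OF pprv.pS]] by blast
next
  case pK then show ?case using pprv.pMP[OF pprv.pK pprv.pK] by blast
next
  case pS then show ?case using pprv.pMP[OF pprv.pK pprv.pS] by blast
next
  case pDN then show ?case using pprv.pMP[OF pprv.pK pprv.pDN] by blast
qed

lemma pprv_Bot_elim: "pprv G Bot \<Longrightarrow> pprv G \<phi>"
proof -
  assume "pprv G Bot"
  then have "pprv G (Neg (Neg \<phi>))" unfolding Neg_def using pMP[OF pK] by blast
  then show ?thesis using pMP[OF pDN] by blast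
qed

lemma pprv_cases: "pprv (insert a G) \<phi> \<Longrightarrow> pprv (insert (Neg a) G) \<phi> \<Longrightarrow> pprv G \<phi>"
proof -
  assume 1: "pprv (insert a G) \<phi>" and 2: "pprv (insert (Neg a) G) \<phi>"
  have A: "pprv G (Imp a \<phi>)" "pprv G (Imp (Neg a) \<phi>)" using 1 2 pprv_deduction by auto
  let ?H = "insert (Neg \<phi>) G"
  have "pprv (insert a ?H) (Imp a \<phi>)" using A(1) by (rule pprv_mono) auto
  moreover have "pprv (insert a ?H) a" by (rule pAx) simp
  ultimately have "pprv (insert a ?H) \<phi>" by (rule pMP)
  moreover have "pprv (insert a ?H) (Imp \<phi> Bot)" by (rule pAx) (simp add: Neg_def)
  ultimately have "pprv (insert a ?H) Bot" using pMP by blast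
  then have "pprv ?H (Neg a)" unfolding Neg_def by (rule pprv_deduction)
  moreover have "pprv ?H (Imp (Neg a) \<phi>)" using A(2) by (rule pprv_mono) auto
  ultimately have "pprv ?H \<phi>" using pMP by blast
  moreover have "pprv ?H (Imp \<phi> Bot)" by (rule pAx) (simp add: Neg_def)
  ultimately have "pprv ?H Bot" using pMP by blast
  then have "pprv G (Neg (Neg \<phi>))" unfolding Neg_def by (rule pprv_deduction)
  then show ?thesis using pMP[OF pDN] by blast
qed

primrec peval :: "(fm \<Rightarrow> bool) \<Rightarrow> fm \<Rightarrow> bool" where
  "peval v (Eq s t) = v (Eq s t)"
| "peval v Bot = False"
| "peval v (Imp a b) = (peval v a \<longrightarrow> peval v b)"
| "peval v (All a) = v (All a)"

primrec atoms :: "fm \<Rightarrow> fm set" where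
  "atoms (Eq s t) = {Eq s t}"
| "atoms Bot = {}"
| "atoms (Imp a b) = atoms a \<union> atoms b"
| "atoms (All a) = {All a}"

lemma finite_atoms: "finite (atoms \<phi>)"
  by (induction \<phi>) auto

lemma peval_simps[simp]:
  "peval v (Neg a) = (\<not> peval v a)"
  "peval v (Or a b) = (peval v a \<or> peval v b)"
  "peval v (And a b) = (peval v a \<and> peval v b)"
  "peval v (Iff a b) = (peval v a \<longleftrightarrow> peval v b)"
  by (auto simp: Neg_def Or_def And_def Iff_def)

definition lit :: "(fm \<Rightarrow> bool) \<Rightarrow> fm \<Rightarrow> fm" where
  "lit v a = (if v a then a else Neg a)"

lemma pprv_decides_Imp:
  assumes a: "pprv G (if P then a else Neg a)" and b: "pprv G (if Q then b else Neg b)"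
  shows "pprv G (if P \<longrightarrow> Q then Imp a b else Neg (Imp a b))"
proof (cases P)
  case False
  then have "pprv (insert a G) (Imp a Bot)" using a unfolding Neg_def by (auto intro: pprv_mono)
  then have "pprv (insert a G) Bot" using pMP pAx by blast
  then have "pprv G (Imp a b)" by (rule pprv_deduction[OF pprv_Bot_elim])
  then show ?thesis using False by simp
next
  case P: True
  show ?thesis
  proof (cases Q)
    case True
    then show ?thesis using b pMP[OF pK] by simp
  next
    case False
    let ?H = "insert (Imp a b) G"
    have "pprv ?H a" using a P by (auto intro: pprv_mono)
    then have "pprv ?H b" using pMP pAx by blast
    moreover have "pprv ?H (Imp b Bot)" using b False by (auto simp: Neg_def intro: pprv_mono)
    ultimately have "pprv ?H Bot" using pMP by blast
    then show ?thesis using P False unfolding Neg_def by (simp add: pprv_deduction)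
  qed
qed

lemma kalmar: "\<forall>a\<in>atoms \<phi>. lit v a \<in> G \<Longrightarrow> pprv G (if peval v \<phi> then \<phi> else Neg \<phi>)"
proof (induction \<phi>)
  case Bot then show ?case by (simp add: Neg_def pprv_Imp_refl)
next
  case (Imp a b) then show ?case using pprv_decides_Imp by simp
qed (auto simp: lit_def intro: pAx)

lemma pprv_tautology_from_literals:
  assumes "\<forall>v. peval v \<phi>" "finite A"
  shows "A \<subseteq> atoms \<phi> \<Longrightarrow> \<forall>a\<in>atoms \<phi> - A. lit v a \<in> G \<Longrightarrow> pprv G \<phi>"
  using assms(2)
proof (induction A arbitrary: v G)
  case empty
  then show ?case using kalmar[of \<phi> v G] assms(1) by auto
next
  case (insert a A)
  have "pprv (insert a G) \<phi>"
  proof (rule insert.IH[of "v(a := True)" "insert a G"])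
    show "A \<subseteq> atoms \<phi>" using insert.prems by auto
    show "\<forall>b\<in>atoms \<phi> - A. lit (v(a := True)) b \<in> insert a G"
    proof
      fix b assume "b \<in> atoms \<phi> - A"
      then show "lit (v(a := True)) b \<in> insert a G"
        using insert.prems(2) by (cases "b = a") (auto simp: lit_def)
    qed
  qed
  moreover have "pprv (insert (Neg a) G) \<phi>"
  proof (rule insert.IH[of "v(a := False)" "insert (Neg a) G"])
    show "A \<subseteq> atoms \<phi>" using insert.prems by auto
    show "\<forall>b\<in>atoms \<phi> - A. lit (v(a := False)) b \<in> insert (Neg a) G"
    proof
      fix b assume "b \<in> atoms \<phi> - A"
      then show "lit (v(a := False)) b \<in> insert (Neg a) G"
        using insert.prems(2) by (cases "b = a") (auto simp: lit_def)
    qed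
  qed
  ultimately show ?case by (rule pprv_cases)
qed

lemma pprv_tautology: "\<forall>v. peval v \<phi> \<Longrightarrow> pprv {} \<phi>"
  using pprv_tautology_from_literals[of \<phi> "atoms \<phi>" "\<lambda>_. True" "{}"] finite_atoms by auto

lemma prv_pprv: "pprv G \<phi> \<Longrightarrow> \<forall>g\<in>G. prv T g \<Longrightarrow> prv T \<phi>"
proof (induction rule: pprv.induct)
  case (pMP a b) then show ?case using prv.MP by blast
qed (auto intro: prv.Ax prv.K prv.Sd prv.DN)

lemma prv_tautology: "\<forall>v. peval v \<phi> \<Longrightarrow> prv T \<phi>"
  using prv_pprv[OF pprv_tautology] by blast

lemma prv_MP2: "prv T (Imp a (Imp b c)) \<Longrightarrow> prv T a \<Longrightarrow> prv T b \<Longrightarrow> prv T c"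
  by (rule prv.MP[OF prv.MP])
lemma prv_MP3: "prv T (Imp a (Imp b (Imp c d))) \<Longrightarrow> prv T a \<Longrightarrow> prv T b \<Longrightarrow> prv T c \<Longrightarrow> prv T d"
  by (rule prv.MP[OF prv_MP2])

lemma taut_MP: "prv T a \<Longrightarrow> \<forall>v. peval v (Imp a b) \<Longrightarrow> prv T b"
  by (rule prv.MP[OF prv_tautology])
lemma taut_MP2: "prv T a \<Longrightarrow> prv T b \<Longrightarrow> \<forall>v. peval v (Imp a (Imp b c)) \<Longrightarrow> prv T c"
  by (rule prv_MP2[OF prv_tautology])
lemma taut_MP3:
  "prv T a \<Longrightarrow> prv T b \<Longrightarrow> prv T c \<Longrightarrow> \<forall>v. peval v (Imp a (Imp b (Imp c d))) \<Longrightarrow> prv T d"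
  by (rule prv_MP3[OF prv_tautology])
lemma taut_MP4:
  "prv T a \<Longrightarrow> prv T b \<Longrightarrow> prv T c \<Longrightarrow> prv T d \<Longrightarrow>
   \<forall>v. peval v (Imp a (Imp b (Imp c (Imp d f)))) \<Longrightarrow> prv T f"
  by (rule prv.MP[OF prv_MP3[OF prv_tautology]])

lemma prv_Imp_trans: "prv T (Imp a b) \<Longrightarrow> prv T (Imp b c) \<Longrightarrow> prv T (Imp a c)"
  by (rule taut_MP2[of T "Imp a b" "Imp b c"]) auto

lemma prv_decides_Imp:
  "prv T (if P then a else Neg a) \<Longrightarrow> prv T (if Q then b else Neg b) \<Longrightarrow>
   prv T (if P \<longrightarrow> Q then Imp a b else Neg (Imp a b))"
  by (rule prv_pprv[OF pprv_decides_Imp[OF pAx pAx,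
        where G = "{if P then a else Neg a, if Q then b else Neg b}"]]) auto

section \<open>First-order derived rules\<close>

lemma prv_mono: "prv T \<phi> \<Longrightarrow> T \<subseteq> T' \<Longrightarrow> prv T' \<phi>"
proof (induction rule: prv.induct)
  case (MP a b) then show ?case using prv.MP by blast
next
  case (Gen a) then show ?case using prv.Gen by blast
qed (auto intro: prv.Ax prv.K prv.Sd prv.DN prv.AllE prv.AllI prv.Refl prv.EqSub)

lemma prv_deduction: "prv (insert \<phi> T) \<psi> \<Longrightarrow> closedf 0 \<phi> \<Longrightarrow> prv T (Imp \<phi> \<psi>)"
proof (induction rule: prv.induct)
  case (Ax \<chi>) then show ?case
  proof (cases "\<chi> = \<phi>")
    case True then show ?thesis using prv_tautology[of "Imp \<phi> \<phi>"] by simp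
  next
    case False then have "\<chi> \<in> T" using Ax by simp
    then show ?thesis using prv.MP[OF prv.K prv.Ax] by blast
  qed
next
  case (MP a b) then show ?case using prv.MP[OF prv.MP[OF prv.Sd]] by blast
next
  case (Gen a)
  then have "prv T (All (Imp \<phi> a))" by (simp add: prv.Gen)
  moreover have "prv T (Imp (All (Imp (liftf 0 \<phi>) a)) (Imp \<phi> (All a)))" by (rule prv.AllI)
  ultimately show ?case using prv.MP liftf_closed[OF Gen.prems, of 0] by auto
qed (rule prv.MP[OF prv.K], rule prv.intros)+

lemma prv_Neg_if_inconsistent: "\<not> consistent (insert \<phi> T) \<Longrightarrow> sentence \<phi> \<Longrightarrow> prv T (Neg \<phi>)"
  unfolding Neg_def sentence_def consistent_def by (rule prv_deduction) auto

lemma prv_AllE: "prv T (All \<phi>) \<Longrightarrow> prv T (substf 0 t \<phi>)"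
  using prv.MP[OF prv.AllE] .

lemma prv_AllE_Var: "prv T (All \<phi>) \<Longrightarrow> closedf 1 \<phi> \<Longrightarrow> prv T \<phi>"
  using prv_AllE[of T \<phi> "Var 0"] substf_Var_id[of 0 \<phi>] by simp

lemma prv_ExI_Imp: "prv T (Imp (substf 0 t \<phi>) (Ex \<phi>))"
proof -
  have "prv T (Imp (All (Neg \<phi>)) (Neg (substf 0 t \<phi>)))" using prv.AllE[of T "Neg \<phi>" t] by simp
  then show ?thesis unfolding Ex_def by (rule taut_MP) auto
qed

lemma prv_ExI: "prv T (substf 0 t \<phi>) \<Longrightarrow> prv T (Ex \<phi>)"
  using prv.MP[OF prv_ExI_Imp] .

lemma prv_AllI: "prv T (Imp (liftf 0 \<psi>) \<phi>) \<Longrightarrow> prv T (Imp \<psi> (All \<phi>))"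
  using prv.MP[OF prv.AllI prv.Gen] .

lemma prv_AllI_closed: "prv T (Imp \<psi> \<phi>) \<Longrightarrow> closedf 0 \<psi> \<Longrightarrow> prv T (Imp \<psi> (All \<phi>))"
  using prv_AllI[of T \<psi> \<phi>] liftf_closed[of 0 \<psi> 0] by simp

lemma prv_ExE: "prv T (Imp \<phi> (liftf 0 \<chi>)) \<Longrightarrow> prv T (Imp (Ex \<phi>) \<chi>)"
proof -
  assume "prv T (Imp \<phi> (liftf 0 \<chi>))"
  then have "prv T (Imp (liftf 0 (Neg \<chi>)) (Neg \<phi>))" by (rule taut_MP) auto
  then have "prv T (Imp (Neg \<chi>) (All (Neg \<phi>)))" by (rule prv_AllI)
  then show ?thesis unfolding Ex_def by (rule taut_MP) auto
qed

lemma prv_ExE_closed: "prv T (Imp \<phi> \<chi>) \<Longrightarrow> closedf 0 \<chi> \<Longrightarrow> prv T (Imp (Ex \<phi>) \<chi>)"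
  using prv_ExE[of T \<phi> \<chi>] liftf_closed[of 0 \<chi> 0] by simp

section \<open>Equality\<close>

lemma prv_Eq_sym_Imp: "prv T (Imp (Eq s t) (Eq t s))"
proof -
  have "prv T (Imp (Eq s t) (Imp (Eq s s) (Eq t s)))"
    using prv.EqSub[of T s t "Eq (Var 0) (liftt 0 s)"] by simp
  then show ?thesis by (rule taut_MP2[OF _ prv.Refl]) auto
qed

lemma prv_Eq_sym: "prv T (Eq s t) \<Longrightarrow> prv T (Eq t s)"
  using prv.MP[OF prv_Eq_sym_Imp] .

lemma prv_Eq_trans_Imp: "prv T (Imp (Eq r s) (Imp (Eq s t) (Eq r t)))"
proof -
  have "prv T (Imp (Eq s t) (Imp (Eq r s) (Eq r t)))"
    using prv.EqSub[of T s t "Eq (liftt 0 r) (Var 0)"] by simp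
  then show ?thesis by (rule taut_MP) auto
qed

lemma prv_Eq_trans: "prv T (Eq r s) \<Longrightarrow> prv T (Eq s t) \<Longrightarrow> prv T (Eq r t)"
  using prv_MP2[OF prv_Eq_trans_Imp] .

lemma prv_Eq_cong:
  assumes "prv T (Eq s t)" shows "prv T (Eq (substt 0 s u) (substt 0 t u))"
proof -
  let ?su = "substt 0 s u"
  have "prv T (Imp (Eq s t) (Imp (Eq ?su ?su) (Eq ?su (substt 0 t u))))"
    using prv.EqSub[of T s t "Eq (liftt 0 ?su) u"] by simp
  then show ?thesis using prv_MP2 assms prv.Refl by blast
qed

lemma prv_Eq_S: "prv T (Eq s t) \<Longrightarrow> prv T (Eq (S s) (S t))"
  using prv_Eq_cong[of T s t "S (Var 0)"] by simp

lemma prv_Eq_Plus: "prv T (Eq s t) \<Longrightarrow> prv T (Eq s' t') \<Longrightarrow> prv T (Eq (Plus s s') (Plus t t'))"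
  using prv_Eq_cong[of T s t "Plus (Var 0) (liftt 0 s')"]
    prv_Eq_cong[of T s' t' "Plus (liftt 0 t) (Var 0)"]
  by (auto intro: prv_Eq_trans)

lemma prv_Eq_Times: "prv T (Eq s t) \<Longrightarrow> prv T (Eq s' t') \<Longrightarrow> prv T (Eq (Times s s') (Times t t'))"
  using prv_Eq_cong[of T s t "Times (Var 0) (liftt 0 s')"]
    prv_Eq_cong[of T s' t' "Times (liftt 0 t) (Var 0)"]
  by (auto intro: prv_Eq_trans)

lemma prv_Eq_Var_subst: "closedf 1 \<phi> \<Longrightarrow> prv T (Imp (Eq (Var 0) t) (Imp (substf 0 t \<phi>) \<phi>))"
  using prv_Imp_trans[OF prv_Eq_sym_Imp prv.EqSub[of T t "Var 0" \<phi>]] substf_Var_id[of 0 \<phi>]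
  by simp

lemma prv_Le_subst_right: "prv T (Imp (Eq s t) (Imp (Le r s) (Le r t)))"
  using prv.EqSub[of T s t "Le (liftt 0 r) (Var 0)"] by simp

lemma prv_All_Imp_Eq_iff:
  assumes "closedf 1 \<phi>" "closedt 0 t"
  shows "prv T (Iff (All (Imp (Eq (Var 0) t) \<phi>)) (substf 0 t \<phi>))"
proof -
  have "prv T (Imp (All (Imp (Eq (Var 0) t) \<phi>)) (Imp (Eq t t) (substf 0 t \<phi>)))"
    using prv.AllE[of T "Imp (Eq (Var 0) t) \<phi>" t] substt_closed[OF assms(2)] by simp
  moreover have "prv T (Imp (substf 0 t \<phi>) (Imp (Eq (Var 0) t) \<phi>))"
    by (rule taut_MP[OF prv_Eq_Var_subst[OF assms(1)]]) auto
  then have "prv T (Imp (substf 0 t \<phi>) (All (Imp (Eq (Var 0) t) \<phi>)))"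
    using assms closedf_substf[of 0 \<phi> 0 t] by (intro prv_AllI_closed) auto
  ultimately show ?thesis by (rule taut_MP3[OF _ prv.Refl]) auto
qed

lemma prv_Ex_And_functional_iff:
  assumes "closedf 1 \<chi>" "closedt 0 t"
    and "prv T (substf 0 t \<delta>)" "prv T (Imp \<delta> (Eq (Var 0) t))"
  shows "prv T (Iff (Ex (And \<delta> \<chi>)) (substf 0 t \<chi>))"
proof -
  have "prv T (Imp (Eq (Var 0) t) (Imp \<chi> (substf 0 t \<chi>)))"
    using prv.EqSub[of T "Var 0" t \<chi>] substf_Var_id[of 0 \<chi>] assms(1) by simp
  then have "prv T (Imp (And \<delta> \<chi>) (substf 0 t \<chi>))"
    by (rule taut_MP2[OF assms(4)]) auto
  then have "prv T (Imp (Ex (And \<delta> \<chi>)) (substf 0 t \<chi>))"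
    using assms(1,2) closedf_substf[of 0 \<chi> 0 t] by (intro prv_ExE_closed) auto
  moreover have "prv T (Imp (And (substf 0 t \<delta>) (substf 0 t \<chi>)) (Ex (And \<delta> \<chi>)))"
    using prv_ExI_Imp[of T t "And \<delta> \<chi>"] by simp
  then have "prv T (Imp (substf 0 t \<chi>) (Ex (And \<delta> \<chi>)))"
    by (rule taut_MP2[OF _ assms(3)]) auto
  ultimately show ?thesis by (rule taut_MP2) auto
qed

section \<open>Robinson arithmetic decides closed \<open>\<Delta>\<^sub>0\<close> formulas\<close>

definition BAll :: "trm \<Rightarrow> fm \<Rightarrow> fm" where
  "BAll t \<phi> = All (Imp (Le (Var 0) (liftt 0 t)) \<phi>)"

definition BEx :: "trm \<Rightarrow> fm \<Rightarrow> fm" where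
  "BEx t \<phi> = Neg (BAll t (Neg \<phi>))"

lemma substf_BAll[simp]: "substf k u (BAll t \<phi>) = BAll (substt k u t) (substf (Suc k) (liftt 0 u) \<phi>)"
  by (simp add: BAll_def substt_liftt_comm)
lemma closedf_BAll[simp]: "closedf k (BAll t \<phi>) = (closedt k t \<and> closedf (Suc k) \<phi>)"
  by (simp add: BAll_def)
lemma evalf_BAll[simp]: "evalf e (BAll t \<phi>) = (\<forall>x\<le>evalt e t. evalf (x ## e) \<phi>)"
  by (auto simp: BAll_def)

lemma substf_BEx[simp]: "substf k u (BEx t \<phi>) = BEx (substt k u t) (substf (Suc k) (liftt 0 u) \<phi>)"
  by (simp add: BEx_def)
lemma closedf_BEx[simp]: "closedf k (BEx t \<phi>) = (closedt k t \<and> closedf (Suc k) \<phi>)"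
  by (simp add: BEx_def)
lemma evalf_BEx[simp]: "evalf e (BEx t \<phi>) = (\<exists>x\<le>evalt e t. evalf (x ## e) \<phi>)"
  by (auto simp: BEx_def)

inductive delta0 :: "fm \<Rightarrow> bool" where
  delta0_Eq: "delta0 (Eq s t)"
| delta0_Bot: "delta0 Bot"
| delta0_Imp: "delta0 a \<Longrightarrow> delta0 b \<Longrightarrow> delta0 (Imp a b)"
| delta0_BAll: "delta0 \<phi> \<Longrightarrow> delta0 (BAll t \<phi>)"

lemma delta0_substf: "delta0 \<phi> \<Longrightarrow> delta0 (substf k u \<phi>)"
  by (induction arbitrary: k u rule: delta0.induct) (auto intro: delta0.intros)

lemma delta0_Neg[intro]: "delta0 a \<Longrightarrow> delta0 (Neg a)"
  by (auto simp: Neg_def intro: delta0.intros)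
lemma delta0_Or[intro]: "delta0 a \<Longrightarrow> delta0 b \<Longrightarrow> delta0 (Or a b)"
  by (auto simp: Or_def intro: delta0.intros)
lemma delta0_And[intro]: "delta0 a \<Longrightarrow> delta0 b \<Longrightarrow> delta0 (And a b)"
  by (auto simp: And_def intro: delta0.intros)
lemma delta0_BEx[intro]: "delta0 \<phi> \<Longrightarrow> delta0 (BEx t \<phi>)"
  by (auto simp: BEx_def intro: delta0.intros)

primrec fsize :: "fm \<Rightarrow> nat" where
  "fsize (Eq s t) = 1"
| "fsize Bot = 1"
| "fsize (Imp a b) = Suc (fsize a + fsize b)"
| "fsize (All a) = Suc (fsize a)"

lemma fsize_substf[simp]: "fsize (substf k u \<phi>) = fsize \<phi>"
  by (induction \<phi> arbitrary: k u) auto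

lemma prv_BigOr_elim: "(\<And>x. x \<in> set xs \<Longrightarrow> prv T (Imp x \<psi>)) \<Longrightarrow> prv T (Imp (BigOr xs) \<psi>)"
proof (induction xs)
  case Nil
  have "prv T (Imp Bot \<psi>)" by (rule prv_tautology) simp
  then show ?case by (simp add: BigOr_def)
next
  case (Cons a xs)
  then have "prv T (Imp a \<psi>)" "prv T (Imp (BigOr xs) \<psi>)" by auto
  then have "prv T (Imp (Or a (BigOr xs)) \<psi>)" by (rule taut_MP2) auto
  then show ?case by (simp add: BigOr_def)
qed

locale R_extension =
  fixes T :: "fm set"
  assumes R_axioms: "\<forall>\<psi>\<in>R_axioms. prv T \<psi>"
begin

lemma R_Plus_num: "prv T (Eq (Plus (num n) (num m)) (num (n + m)))"
  using R_axioms unfolding R_axioms_def by blast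
lemma R_Times_num: "prv T (Eq (Times (num n) (num m)) (num (n * m)))"
  using R_axioms unfolding R_axioms_def by blast
lemma R_num_neq: "n \<noteq> m \<Longrightarrow> prv T (Neg (Eq (num n) (num m)))"
  using R_axioms unfolding R_axioms_def by blast
lemma R_Le_num: "prv T (All (Imp (Le (Var 0) (num n)) (BigOr (map (\<lambda>i. Eq (Var 0) (num i)) [0..<Suc n]))))"
  using R_axioms unfolding R_axioms_def by blast
lemma R_Le_total: "prv T (All (Or (Le (Var 0) (num n)) (Le (num n) (Var 0))))"
  using R_axioms unfolding R_axioms_def by blast

lemma prv_Eq_num_evalt: "closedt 0 t \<Longrightarrow> prv T (Eq t (num (evalt e t)))"
proof (induction t)
  case Zero then show ?case by (simp add: prv.Refl)
next
  case (S t) then show ?case using prv_Eq_S by simp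
next
  case (Plus s t) then show ?case using prv_Eq_Plus R_Plus_num prv_Eq_trans by fastforce
next
  case (Times s t) then show ?case using prv_Eq_Times R_Times_num prv_Eq_trans by fastforce
qed auto

lemma prv_Le_num: "i \<le> n \<Longrightarrow> prv T (Le (num i) (num n))"
  using prv_ExI[of T "num (n - i)" "Eq (Plus (Var 0) (num i)) (num n)"] R_Plus_num[of "n - i" i]
  by (simp add: Le_def)

lemma prv_Le_num_cases:
  assumes "\<And>i. i \<le> n \<Longrightarrow> prv T (Imp (Eq t (num i)) \<psi>)"
  shows "prv T (Imp (Le t (num n)) \<psi>)"
proof -
  have "prv T (Imp (Le t (num n)) (BigOr (map (\<lambda>i. Eq t (num i)) [0..<Suc n])))"
    using prv_AllE[OF R_Le_num, of t] by (simp add: o_def)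
  moreover have "prv T (Imp (BigOr (map (\<lambda>i. Eq t (num i)) [0..<Suc n])) \<psi>)"
    using assms by (intro prv_BigOr_elim) (auto simp del: upt_Suc)
  ultimately show ?thesis by (rule prv_Imp_trans)
qed

lemma prv_decides_Eq:
  assumes "closedt 0 s" "closedt 0 t"
  shows "prv T (if evalt e s = evalt e t then Eq s t else Neg (Eq s t))"
proof -
  let ?m = "num (evalt e s)" and ?n = "num (evalt e t)"
  have s: "prv T (Eq s ?m)" and t: "prv T (Eq t ?n)"
    using assms prv_Eq_num_evalt by auto
  show ?thesis
  proof (cases "evalt e s = evalt e t")
    case True
    then have "prv T (Eq s ?n)" using s by simp
    then show ?thesis using prv_Eq_trans[OF _ prv_Eq_sym[OF t]] True by simp
  next
    case False
    have "prv T (Imp (Eq s t) (Eq ?m t))"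
      using prv.MP[OF prv_Eq_trans_Imp prv_Eq_sym[OF s]] .
    moreover have "prv T (Imp (Eq ?m t) (Eq ?m ?n))"
      by (rule taut_MP2[OF prv_Eq_trans_Imp[of T ?m t ?n] t]) auto
    ultimately have "prv T (Imp (Eq s t) (Eq ?m ?n))" by (rule prv_Imp_trans)
    then have "prv T (Neg (Eq s t))" by (rule taut_MP2[OF _ R_num_neq[OF False]]) auto
    then show ?thesis using False by simp
  qed
qed

lemma prv_decides_BAll:
  assumes t: "closedt 0 t" and \<psi>: "closedf 1 \<psi>"
    and instances: "\<And>i. prv T (if evalf e (substf 0 (num i) \<psi>) then substf 0 (num i) \<psi>
                              else Neg (substf 0 (num i) \<psi>))"
  shows "prv T (if evalf e (BAll t \<psi>) then BAll t \<psi> else Neg (BAll t \<psi>))"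
proof -
  define n where "n = evalt e t"
  have tn: "prv T (Eq t (num n))" using t prv_Eq_num_evalt n_def by simp
  show ?thesis
  proof (cases "\<forall>i\<le>n. evalf e (substf 0 (num i) \<psi>)")
    case True
    have "prv T (Imp (Le (Var 0) t) (Le (Var 0) (num n)))"
      using prv.MP[OF prv_Le_subst_right tn] .
    moreover have "prv T (Imp (Le (Var 0) (num n)) \<psi>)"
    proof (rule prv_Le_num_cases)
      fix i assume "i \<le> n"
      then have "prv T (substf 0 (num i) \<psi>)" using True instances[of i] by simp
      then show "prv T (Imp (Eq (Var 0) (num i)) \<psi>)"
        by (rule taut_MP2[OF prv_Eq_Var_subst[OF \<psi>]]) auto
    qed
    ultimately have "prv T (Imp (Le (Var 0) t) \<psi>)" by (rule prv_Imp_trans)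
    then have "prv T (BAll t \<psi>)" unfolding BAll_def using liftt_closed[OF t] by (simp add: prv.Gen)
    then show ?thesis using True by (simp add: n_def evalf_substf)
  next
    case False
    then obtain i where i: "i \<le> n" "\<not> evalf e (substf 0 (num i) \<psi>)" by auto
    have "prv T (Le (num i) t)"
      using prv_MP2[OF prv_Le_subst_right prv_Eq_sym[OF tn] prv_Le_num[OF i(1)]] .
    moreover have "prv T (Imp (BAll t \<psi>) (Imp (Le (num i) t) (substf 0 (num i) \<psi>)))"
      using prv.AllE[of T "Imp (Le (Var 0) (liftt 0 t)) \<psi>" "num i"] by (simp add: BAll_def)
    moreover have "prv T (Neg (substf 0 (num i) \<psi>))" using i instances[of i] by simp
    ultimately have "prv T (Neg (BAll t \<psi>))" by (rule taut_MP3) auto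
    then show ?thesis using False i by (auto simp: n_def evalf_substf)
  qed
qed

lemma delta0_decided:
  "delta0 \<phi> \<Longrightarrow> closedf 0 \<phi> \<Longrightarrow> prv T (if evalf e \<phi> then \<phi> else Neg \<phi>)"
proof (induction "fsize \<phi>" arbitrary: \<phi> rule: less_induct)
  case less
  from less.prems(1) show ?case
  proof (cases rule: delta0.cases)
    case (delta0_Eq s t)
    then show ?thesis
      using less.prems(2) unfolding delta0_Eq(1) evalf.simps by (intro prv_decides_Eq) auto
  next
    case delta0_Bot
    then show ?thesis by (simp add: Neg_def prv_tautology)
  next
    case (delta0_Imp a b)
    then have "prv T (if evalf e a then a else Neg a)" "prv T (if evalf e b then b else Neg b)"
      using less by auto
    then show ?thesis unfolding delta0_Imp(1) evalf.simps by (rule prv_decides_Imp)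
  next
    case (delta0_BAll \<psi> t)
    have "fsize (substf 0 (num i) \<psi>) < fsize \<phi>" for i
      using delta0_BAll by (simp add: BAll_def)
    moreover have "closedf 0 (substf 0 (num i) \<psi>)" for i
      using less.prems(2) delta0_BAll closedf_substf[of 0 \<psi> 0 "num i"] by simp
    ultimately have "prv T (if evalf e (substf 0 (num i) \<psi>) then substf 0 (num i) \<psi>
                              else Neg (substf 0 (num i) \<psi>))" for i
      using less.hyps delta0_BAll(2) delta0_substf by blast
    then show ?thesis
      using less.prems(2) unfolding delta0_BAll(1) by (intro prv_decides_BAll) auto
  qed
qed

lemma delta0_true:
  assumes "delta0 \<phi>" "closedf 0 \<phi>" "evalf e \<phi>" shows "prv T \<phi>"
  using delta0_decided[OF assms(1,2), of e] assms(3) by simp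

lemma delta0_false:
  assumes "delta0 \<phi>" "closedf 0 \<phi>" "\<not> evalf e \<phi>" shows "prv T (Neg \<phi>)"
  using delta0_decided[OF assms(1,2), of e] assms(3) by simp

end

section \<open>A \<open>\<Delta>\<^sub>0\<close> graph of the diagonal function\<close>

abbreviation lift :: "trm \<Rightarrow> trm" where "lift t \<equiv> liftt 0 t"

definition Pair_fm :: "trm \<Rightarrow> trm \<Rightarrow> trm \<Rightarrow> fm" where
  "Pair_fm x y z = Eq (Plus z z) (Plus (Times (Plus x y) (S (Plus x y))) (Plus x x))"

lemma triangle_twice: "2 * triangle n = n * Suc n"
  by (induction n) (auto simp: algebra_simps)

lemma evalf_Pair_fm[simp]: "evalf e (Pair_fm x y z) = (evalt e z = prod_encode (evalt e x, evalt e y))"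
proof -
  have "(c + c = (a + b) * Suc (a + b) + (a + a)) = (c = triangle (a + b) + a)" for a b c :: nat
    using triangle_twice by (metis mult_2 add_mult_distrib2 mult_cancel_left zero_neq_numeral)
  then show ?thesis by (simp add: Pair_fm_def prod_encode_def)
qed
lemma substf_Pair_fm[simp]: "substf k u (Pair_fm x y z) = Pair_fm (substt k u x) (substt k u y) (substt k u z)"
  by (simp add: Pair_fm_def)
lemma closedf_Pair_fm[simp]: "closedf k (Pair_fm x y z) = (closedt k x \<and> closedt k y \<and> closedt k z)"
  by (auto simp: Pair_fm_def)
lemma delta0_Pair_fm[intro]: "delta0 (Pair_fm x y z)"
  by (auto simp: Pair_fm_def intro: delta0.intros)

definition beta :: "nat \<Rightarrow> nat \<Rightarrow> nat \<Rightarrow> nat" where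
  "beta a b i = a mod Suc (Suc i * b)"

definition Beta_fm :: "trm \<Rightarrow> trm \<Rightarrow> trm \<Rightarrow> trm \<Rightarrow> fm" where
  "Beta_fm A B I R =
    BEx A (And (Eq (lift A) (Plus (Times (Var 0) (S (Times (S (lift I)) (lift B)))) (lift R)))
      (BEx (S (Times (S (lift I)) (lift B)))
         (Eq (Plus (Var 0) (S (lift (lift R)))) (lift (S (Times (S (lift I)) (lift B)))))))"

lemma mod_iff_bounded_division:
  "0 < (m::nat) \<Longrightarrow> (\<exists>q\<le>a. a = q * m + r \<and> (\<exists>d\<le>m. d + Suc r = m)) = (r = a mod m)"
proof
  assume "0 < m" "\<exists>q\<le>a. a = q * m + r \<and> (\<exists>d\<le>m. d + Suc r = m)"
  then show "r = a mod m" by (metis add_Suc_right less_add_Suc2 mod_mult_self3 mod_less)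
next
  assume m: "0 < m" "r = a mod m"
  have "a div m \<le> a" by (simp add: div_le_dividend)
  moreover have "a = a div m * m + r" using m by simp
  moreover have "r < m" using m by simp
  then have "m - Suc r \<le> m \<and> m - Suc r + Suc r = m" by simp
  ultimately show "\<exists>q\<le>a. a = q * m + r \<and> (\<exists>d\<le>m. d + Suc r = m)" by blast
qed

lemma evalf_Beta_fm[simp]:
  "evalf e (Beta_fm A B I R) = (evalt e R = beta (evalt e A) (evalt e B) (evalt e I))"
  using mod_iff_bounded_division[of "Suc (Suc (evalt e I) * evalt e B)" "evalt e A" "evalt e R"]
  by (simp add: Beta_fm_def beta_def)
lemma substf_Beta_fm[simp]:
  "substf k u (Beta_fm A B I R) = Beta_fm (substt k u A) (substt k u B) (substt k u I) (substt k u R)"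
  by (simp add: Beta_fm_def substt_liftt_comm)
lemma closedf_Beta_fm[simp]:
  "closedf k (Beta_fm A B I R) = (closedt k A \<and> closedt k B \<and> closedt k I \<and> closedt k R)"
  by (auto simp: Beta_fm_def)
lemma delta0_Beta_fm[intro]: "delta0 (Beta_fm A B I R)"
  by (auto simp: Beta_fm_def intro: delta0.intros)

lemma coprime_beta_moduli:
  assumes "i < j" "j < M" shows "coprime (Suc (Suc i * fact M)) (Suc (Suc j * fact M) :: nat)"
proof -
  let ?b = "fact M :: nat"
  let ?d = "gcd (Suc (Suc i * ?b)) (Suc (Suc j * ?b))"
  have d1: "?d dvd Suc (Suc i * ?b)" and d2: "?d dvd Suc (Suc j * ?b)" by auto
  have m1: "?d dvd Suc j * Suc (Suc i * ?b)" using d1 by (rule dvd_mult)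
  have m2: "?d dvd Suc i * Suc (Suc j * ?b)" using d2 by (rule dvd_mult)
  have eq: "Suc j * Suc (Suc i * ?b) = Suc i * Suc (Suc j * ?b) + (j - i)"
    using assms by (simp add: algebra_simps)
  have "?d dvd Suc i * Suc (Suc j * ?b) + (j - i)" using m1 unfolding eq .
  then have "?d dvd (j - i)" using dvd_add_right_iff[OF m2] by simp
  moreover have "j - i > 0" using assms by simp
  ultimately have "?d \<le> j - i" by (simp add: dvd_imp_le)
  moreover have "?d \<ge> 1" by (simp add: Suc_leI)
  ultimately have "?d dvd ?b" using assms by (intro dvd_fact) auto
  then have "?d dvd Suc i * ?b" by simp
  moreover have "Suc (Suc i * ?b) = Suc i * ?b + 1" by simp
  ultimately have "?d dvd 1" using d1 dvd_add_right_iff by metis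
  then show ?thesis by (simp add: coprime_iff_gcd_eq_1)
qed

lemma beta_exists: "\<exists>a b. \<forall>i\<le>y. beta a b i = s i"
proof -
  define M where "M = Suc (y + Max (s ` {..y}))"
  define b where "b = (fact M :: nat)"
  have sM: "s i < M" if "i \<le> y" for i
  proof -
    have "s i \<le> Max (s ` {..y})" using that by (intro Max_ge) auto
    then show ?thesis by (simp add: M_def)
  qed
  have yM: "y < M" by (simp add: M_def)
  have "b \<ge> M" unfolding b_def by (rule fact_ge_self)
  have cop: "\<forall>i\<in>{..y}. \<forall>j\<in>{..y}. i \<noteq> j \<longrightarrow> coprime (Suc (Suc i * b)) (Suc (Suc j * b))"
  proof (intro ballI impI)
    fix i j assume ij: "i \<in> {..y}" "j \<in> {..y}" "i \<noteq> j"
    show "coprime (Suc (Suc i * b)) (Suc (Suc j * b))"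
    proof (cases "i < j")
      case True then show ?thesis using coprime_beta_moduli[of i j M] ij yM b_def by auto
    next
      case False then have "j < i" using ij by auto
      then show ?thesis using coprime_beta_moduli[of j i M] ij yM b_def by (auto simp: coprime_commute)
    qed
  qed
  obtain a where a: "\<forall>i\<in>{..y}. [a = s i] (mod (Suc (Suc i * b)))"
    using chinese_remainder_nat[OF _ cop] by auto
  have "\<forall>i\<le>y. beta a b i = s i"
  proof (intro allI impI)
    fix i assume i: "i \<le> y"
    have "s i < M" using sM i by auto
    also have "M \<le> b" by fact
    also have "b < Suc (Suc i * b)" by simp
    finally have "s i < Suc (Suc i * b)" .
    then show "beta a b i = s i" using a i unfolding beta_def cong_def by auto
  qed
  then show ?thesis by blast
qed

text \<open>Diagonalising \<open>G\<close> as \<open>\<forall>x. x = \<ulcorner>G\<urcorner> \<longrightarrow> G\<close> rather than as the instance \<open>G(\<ulcorner>G\<urcorner>)\<close> makes the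
  code of the diagonal sentence a simple function of the code of \<open>G\<close>, with no substitution to
  arithmetise.\<close>

definition diag_code :: "nat \<Rightarrow> nat" where
  "diag_code y = prod_encode (3, prod_encode (2, prod_encode (code_fm (Eq (Var 0) (num y)), y)))"

lemma code_fm_diag: "code_fm (All (Imp (Eq (Var 0) (num (code_fm G))) G)) = diag_code (code_fm G)"
  by (simp add: diag_code_def)

text \<open>The pair \<open>(a, b)\<close> \<open>\<beta>\<close>-codes the codes of the numerals \<open>0, \<dots>, y\<close>, and \<open>c, t\<^sub>1, t\<^sub>2, p\<^sub>1, p\<^sub>2\<close>
  are the codes of the subterms of the diagonal sentence; all witnesses are bounded by \<open>w\<close>.\<close>

definition diag_graph :: "nat \<Rightarrow> nat \<Rightarrow> nat \<Rightarrow> bool" where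
  "diag_graph w z y = (\<exists>a\<le>w. \<exists>b\<le>w. \<exists>c\<le>w. \<exists>t1\<le>w. \<exists>t2\<le>w. \<exists>p1\<le>w. \<exists>p2\<le>w.
     beta a b 0 = 2 \<and>
     (\<forall>i\<le>y. i = y \<or> (\<exists>r1\<le>a. \<exists>r2\<le>a. r1 = beta a b i \<and> r2 = beta a b (Suc i) \<and> r2 = prod_encode (2, r1))) \<and>
     c = beta a b y \<and> t1 = prod_encode (0, c) \<and> t2 = prod_encode (0, t1) \<and>
     p1 = prod_encode (t2, y) \<and> p2 = prod_encode (2, p1) \<and> z = prod_encode (3, p2))"

text \<open>The de Bruijn indices \<open>6, \<dots>, 0\<close> stand for \<open>a, b, c, t\<^sub>1, t\<^sub>2, p\<^sub>1, p\<^sub>2\<close>.\<close>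

definition diag_graph_matrix :: "trm \<Rightarrow> trm \<Rightarrow> fm" where
  "diag_graph_matrix Z Y = And (Beta_fm (Var 6) (Var 5) Zero (num 2))
     (And (BAll Y (Or (Eq (Var 0) (lift Y))
            (BEx (Var 7) (BEx (Var 8) (And (Beta_fm (Var 9) (Var 8) (Var 2) (Var 1))
                 (And (Beta_fm (Var 9) (Var 8) (S (Var 2)) (Var 0)) (Pair_fm (num 2) (Var 1) (Var 0))))))))
     (And (Beta_fm (Var 6) (Var 5) Y (Var 4))
     (And (Pair_fm Zero (Var 4) (Var 3))
     (And (Pair_fm Zero (Var 3) (Var 2))
     (And (Pair_fm (Var 2) Y (Var 1))
     (And (Pair_fm (num 2) (Var 1) (Var 0))
          (Pair_fm (num 3) (Var 0) Z)))))))"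

definition diag_graph_fm :: "trm \<Rightarrow> trm \<Rightarrow> trm \<Rightarrow> fm" where
  "diag_graph_fm W Z Y =
    BEx W (BEx (lift W) (BEx (lift (lift W)) (BEx (lift (lift (lift W)))
      (BEx (lift (lift (lift (lift W)))) (BEx (lift (lift (lift (lift (lift W)))))
        (BEx (lift (lift (lift (lift (lift (lift W))))))
          (diag_graph_matrix (lift (lift (lift (lift (lift (lift (lift Z)))))))
                             (lift (lift (lift (lift (lift (lift (lift Y))))))))))))))"

lemma evalf_diag_graph_fm[simp]:
  "evalf e (diag_graph_fm W Z Y) = diag_graph (evalt e W) (evalt e Z) (evalt e Y)"
  unfolding diag_graph_fm_def diag_graph_matrix_def diag_graph_def by simp
lemma substf_diag_graph_fm[simp]:
  "substf k u (diag_graph_fm W Z Y) = diag_graph_fm (substt k u W) (substt k u Z) (substt k u Y)"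
  unfolding diag_graph_fm_def diag_graph_matrix_def by (simp add: substt_liftt_comm)
lemma closedf_diag_graph_fm[simp]:
  "closedt k W \<Longrightarrow> closedt k Z \<Longrightarrow> closedt k Y \<Longrightarrow> closedf k (diag_graph_fm W Z Y)"
  unfolding diag_graph_fm_def diag_graph_matrix_def by simp
lemma delta0_diag_graph_fm[intro]: "delta0 (diag_graph_fm W Z Y)"
  unfolding diag_graph_fm_def diag_graph_matrix_def by (auto intro!: delta0.intros delta0_BEx delta0_And delta0_Or)

lemma diag_graph_value: assumes "diag_graph w z y" shows "z = diag_code y"
proof -
  obtain a b where ab: "beta a b 0 = 2" "\<forall>i<y. beta a b (Suc i) = prod_encode (2, beta a b i)"
    and z: "z = prod_encode (3, prod_encode (2, prod_encode (prod_encode (0, prod_encode (0, beta a b y)), y)))"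
    using assms unfolding diag_graph_def by (auto, metis order_less_imp_le order_less_irrefl)
  have "beta a b i = code_trm (num i)" if "i \<le> y" for i
    using that by (induction i) (auto simp: ab prod_encode_def)
  then show ?thesis using z by (simp add: diag_code_def prod_encode_def)
qed

lemma diag_graph_exists: "\<exists>w. diag_code y \<le> w \<and> diag_graph w (diag_code y) y"
proof -
  obtain a b where ab: "\<forall>i\<le>y. beta a b i = code_trm (num i)"
    using beta_exists[of y "\<lambda>i. code_trm (num i)"] by blast
  define c where "c = beta a b y"
  define t1 where "t1 = prod_encode (0, c)"
  define t2 where "t2 = prod_encode (0, t1)"
  define p1 where "p1 = prod_encode (t2, y)"
  define p2 where "p2 = prod_encode (2, p1)"
  define w where "w = a + b + c + t1 + t2 + p1 + p2 + diag_code y"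
  have z: "diag_code y = prod_encode (3, p2)"
    using ab by (simp add: p2_def p1_def t2_def t1_def c_def diag_code_def prod_encode_def)
  have start: "beta a b 0 = 2" using ab by (simp add: prod_encode_def)
  have step: "\<forall>i\<le>y. i = y \<or> (\<exists>r1\<le>a. \<exists>r2\<le>a.
      r1 = beta a b i \<and> r2 = beta a b (Suc i) \<and> r2 = prod_encode (2, r1))"
  proof (intro allI impI)
    fix i assume "i \<le> y"
    have "beta a b i \<le> a" "beta a b (Suc i) \<le> a" by (simp_all add: beta_def)
    then show "i = y \<or> (\<exists>r1\<le>a. \<exists>r2\<le>a.
      r1 = beta a b i \<and> r2 = beta a b (Suc i) \<and> r2 = prod_encode (2, r1))"
      using ab \<open>i \<le> y\<close> by (cases "i = y") auto
  qed
  have "a \<le> w" "b \<le> w" "c \<le> w" "t1 \<le> w" "t2 \<le> w" "p1 \<le> w" "p2 \<le> w" "diag_code y \<le> w"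
    by (simp_all add: w_def)
  then show ?thesis
    unfolding diag_graph_def using z start step c_def t1_def t2_def p1_def p2_def by metis
qed

text \<open>R need not rule out a second value of \<open>diag_graph_fm\<close> with a non-standard witness, so
  \<open>Diag_fm Z Y\<close> asks for a witness \<open>w\<close> of \<open>Z\<close> below which no witness yields another value.
  R proves this formula single-valued by comparing \<open>w\<close> with a true witness \<open>m\<close>
  (\<open>R_Le_total\<close>).\<close>

definition diag_unique_below_fm :: "trm \<Rightarrow> trm \<Rightarrow> trm \<Rightarrow> fm" where
  "diag_unique_below_fm W Z Y =
     BAll W (BAll (Var 0) (Imp (diag_graph_fm (Var 1) (Var 0) (lift (lift Y))) (Eq (Var 0) (lift (lift Z)))))"

definition Diag_fm :: "trm \<Rightarrow> trm \<Rightarrow> fm" where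
  "Diag_fm Z Y = Ex (And (And (Le (lift Z) (Var 0)) (diag_graph_fm (Var 0) (lift Z) (lift Y)))
                         (diag_unique_below_fm (Var 0) (lift Z) (lift Y)))"

lemma substf_diag_unique_below_fm[simp]:
  "substf k u (diag_unique_below_fm W Z Y) =
   diag_unique_below_fm (substt k u W) (substt k u Z) (substt k u Y)"
  by (simp add: diag_unique_below_fm_def substt_liftt_comm)
lemma closedf_diag_unique_below_fm[simp]:
  "closedt k W \<Longrightarrow> closedt k Z \<Longrightarrow> closedt k Y \<Longrightarrow> closedf k (diag_unique_below_fm W Z Y)"
  by (simp add: diag_unique_below_fm_def)
lemma delta0_diag_unique_below_fm[intro]: "delta0 (diag_unique_below_fm W Z Y)"
  by (auto simp: diag_unique_below_fm_def intro!: delta0.intros)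
lemma evalf_diag_unique_below_fm[simp]:
  "evalf e (diag_unique_below_fm W Z Y) =
   (\<forall>w'\<le>evalt e W. \<forall>z'\<le>w'. diag_graph w' z' (evalt e Y) \<longrightarrow> z' = evalt e Z)"
  by (simp add: diag_unique_below_fm_def)

lemma substf_Diag_fm[simp]: "substf k u (Diag_fm Z Y) = Diag_fm (substt k u Z) (substt k u Y)"
  by (simp add: Diag_fm_def substt_liftt_comm)
lemma closedf_Diag_fm[simp]: "closedt k Z \<Longrightarrow> closedt k Y \<Longrightarrow> closedf k (Diag_fm Z Y)"
  by (simp add: Diag_fm_def)

context R_extension
begin

lemma prv_Diag_fm_value: "prv T (Diag_fm (num (diag_code k)) (num k))"
proof -
  let ?N = "num (diag_code k)"
  let ?D = "\<lambda>W. And (And (Le ?N W) (diag_graph_fm W ?N (num k))) (diag_unique_below_fm W ?N (num k))"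
  obtain m where "diag_code k \<le> m" and graph: "diag_graph m (diag_code k) k"
    using diag_graph_exists by blast
  from \<open>diag_code k \<le> m\<close> have "prv T (Le ?N (num m))" by (rule prv_Le_num)
  moreover have "prv T (diag_graph_fm (num m) ?N (num k))"
    using graph by (intro delta0_true[where e = "\<lambda>_. 0"]) auto
  moreover have "prv T (diag_unique_below_fm (num m) ?N (num k))"
    by (rule delta0_true[where e = "\<lambda>_. 0"]) (auto dest: diag_graph_value)
  ultimately have "prv T (?D (num m))" by (rule taut_MP3) auto
  then have "prv T (substf 0 (num m) (?D (Var 0)))" by simp
  then show ?thesis unfolding Diag_fm_def by (simp add: prv_ExI)
qed

lemma prv_diag_unique_below_fm_above:
  assumes "diag_code k \<le> m" and graph: "diag_graph m (diag_code k) k"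
  shows "prv T (Imp (Le (num m) (Var 0))
                  (Imp (diag_unique_below_fm (Var 0) (Var 1) (num k)) (Eq (Var 1) (num (diag_code k)))))"
proof -
  let ?N = "num (diag_code k)"
  let ?U = "BAll (num m) (Imp (diag_graph_fm (num m) (Var 0) (num k)) (Eq (Var 0) (Var 2)))"
  have "prv T (Imp (diag_unique_below_fm (Var 0) (Var 1) (num k)) (Imp (Le (num m) (Var 0)) ?U))"
    using prv.AllE[of T "Imp (Le (Var 0) (Var 1))
      (BAll (Var 0) (Imp (diag_graph_fm (Var 1) (Var 0) (num k)) (Eq (Var 0) (Var 3))))" "num m"]
    by (simp add: diag_unique_below_fm_def BAll_def numeral_3_eq_3 numeral_2_eq_2)
  moreover have "prv T (Imp ?U (Imp (Le ?N (num m)) (Imp (diag_graph_fm (num m) ?N (num k)) (Eq ?N (Var 1)))))"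
    using prv.AllE[of T "Imp (Le (Var 0) (num m)) (Imp (diag_graph_fm (num m) (Var 0) (num k)) (Eq (Var 0) (Var 2)))" ?N]
    by (simp add: BAll_def)
  moreover have "prv T (Le ?N (num m))" using assms(1) by (rule prv_Le_num)
  moreover have "prv T (diag_graph_fm (num m) ?N (num k))"
    using graph by (intro delta0_true[where e = "\<lambda>_. 0"]) auto
  ultimately have "prv T (Imp (diag_unique_below_fm (Var 0) (Var 1) (num k))
                              (Imp (Le (num m) (Var 0)) (Eq ?N (Var 1))))"
    by (rule taut_MP4) auto
  then show ?thesis using prv_Eq_sym_Imp[of T ?N "Var 1"] by (rule taut_MP2) auto
qed

lemma prv_diag_graph_fm_num_value:
  "prv T (Imp (And (Le (Var 1) (num j)) (diag_graph_fm (num j) (Var 1) (num k)))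
              (Eq (Var 1) (num (diag_code k))))"
proof -
  let ?\<psi> = "Imp (diag_graph_fm (num j) (Var 1) (num k)) (Eq (Var 1) (num (diag_code k)))"
  have "prv T (Imp (Le (Var 1) (num j)) ?\<psi>)"
  proof (rule prv_Le_num_cases)
    fix i
    show "prv T (Imp (Eq (Var 1) (num i)) ?\<psi>)"
    proof (cases "diag_graph j i k")
      case True
      then have "i = diag_code k" by (rule diag_graph_value)
      then show ?thesis by (intro prv_tautology) simp
    next
      case False
      then have "prv T (Neg (diag_graph_fm (num j) (num i) (num k)))"
        by (intro delta0_false[where e = "\<lambda>_. 0"]) auto
      moreover have "prv T (Imp (Eq (Var 1) (num i))
                        (Imp (diag_graph_fm (num j) (Var 1) (num k)) (diag_graph_fm (num j) (num i) (num k))))"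
        using prv.EqSub[of T "Var 1" "num i" "diag_graph_fm (num j) (Var 0) (num k)"] by simp
      ultimately show ?thesis by (rule taut_MP2) auto
    qed
  qed
  then show ?thesis by (rule taut_MP) auto
qed

lemma prv_diag_graph_fm_below:
  "prv T (Imp (Le (Var 0) (num m))
              (Imp (And (Le (Var 1) (Var 0)) (diag_graph_fm (Var 0) (Var 1) (num k)))
                   (Eq (Var 1) (num (diag_code k)))))"
proof (rule prv_Le_num_cases)
  fix j
  let ?G = "\<lambda>W. And (Le (Var 1) W) (diag_graph_fm W (Var 1) (num k))"
  have "prv T (Imp (Eq (Var 0) (num j)) (Imp (?G (Var 0)) (?G (num j))))"
    using prv.EqSub[of T "Var 0" "num j" "And (Le (Var 2) (Var 0)) (diag_graph_fm (Var 0) (Var 2) (num k))"]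
    by simp
  then show "prv T (Imp (Eq (Var 0) (num j)) (Imp (?G (Var 0)) (Eq (Var 1) (num (diag_code k)))))"
    using prv_diag_graph_fm_num_value[of j k] by (rule taut_MP2) auto
qed

lemma prv_Diag_fm_unique: "prv T (Imp (Diag_fm (Var 0) (num k)) (Eq (Var 0) (num (diag_code k))))"
proof -
  let ?N = "num (diag_code k)"
  obtain m where "diag_code k \<le> m" "diag_graph m (diag_code k) k"
    using diag_graph_exists by blast
  then have above: "prv T (Imp (Le (num m) (Var 0))
                  (Imp (diag_unique_below_fm (Var 0) (Var 1) (num k)) (Eq (Var 1) ?N)))"
    by (rule prv_diag_unique_below_fm_above)
  have "prv T (Or (Le (Var 0) (num m)) (Le (num m) (Var 0)))"
    by (rule prv_AllE_Var[OF R_Le_total]) simp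
  then have "prv T (Imp (And (And (Le (Var 1) (Var 0)) (diag_graph_fm (Var 0) (Var 1) (num k)))
                             (diag_unique_below_fm (Var 0) (Var 1) (num k)))
                        (Eq (Var 1) ?N))"
    by (rule taut_MP3[OF _ prv_diag_graph_fm_below above]) auto
  then show ?thesis
    unfolding Diag_fm_def using prv_ExE[of T _ "Eq (Var 0) ?N"] by simp
qed

lemma diagonal_lemma:
  assumes \<chi>: "closedf 1 \<chi>" shows "\<exists>\<theta>. sentence \<theta> \<and> prv T (Iff \<theta> (inst \<chi> \<theta>))"
proof -
  define G where "G = Ex (And (Diag_fm (Var 0) (Var 1)) \<chi>)"
  define \<theta> where "\<theta> = All (Imp (Eq (Var 0) (num (code_fm G))) G)"
  let ?G\<^sub>K = "Ex (And (Diag_fm (Var 0) (num (code_fm G))) \<chi>)"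
  have G: "closedf 1 G" using closedf_mono[OF \<chi>] by (simp add: G_def)
  have "prv T (Iff \<theta> (substf 0 (num (code_fm G)) G))"
    unfolding \<theta>_def by (rule prv_All_Imp_Eq_iff[OF G closedt_num])
  moreover have "substf 0 (num (code_fm G)) G = ?G\<^sub>K"
    using substf_closed[OF \<chi>] by (simp add: G_def)
  ultimately have "prv T (Iff \<theta> ?G\<^sub>K)" by simp
  moreover have "prv T (Iff ?G\<^sub>K (inst \<chi> \<theta>))"
    unfolding inst_def quote_def \<theta>_def code_fm_diag
    using \<chi> prv_Diag_fm_value prv_Diag_fm_unique by (intro prv_Ex_And_functional_iff) auto
  ultimately have "prv T (Iff \<theta> (inst \<chi> \<theta>))" by (rule taut_MP2) auto
  moreover have "sentence \<theta>" using G by (simp add: \<theta>_def sentence_def)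
  ultimately show ?thesis by blast
qed

end

definition independent :: "fm set \<Rightarrow> fm \<Rightarrow> bool" where
  "independent U \<rho> \<longleftrightarrow> (\<forall>\<phi>. sentence \<phi> \<and> consistent (insert \<phi> U) \<longrightarrow>
      consistent (insert (inst \<rho> \<phi>) (insert \<phi> U)) \<and> consistent (insert (Neg (inst \<rho> \<phi>)) (insert \<phi> U)))"

definition extensional :: "fm set \<Rightarrow> fm \<Rightarrow> bool" where
  "extensional U \<rho> \<longleftrightarrow> (\<forall>\<phi> \<psi>. sentence \<phi> \<and> sentence \<psi> \<and> prv U (Iff \<phi> \<psi>) \<longrightarrow>
      prv U (Iff (inst \<rho> \<phi>) (inst \<rho> \<psi>)))"

lemma fixed_point_refuted:
  assumes "sentence \<theta>" "prv T (Iff \<theta> (Neg \<chi>))"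
    and "consistent (insert \<theta> T) \<Longrightarrow> consistent (insert \<chi> (insert \<theta> T))"
  shows "prv T (Neg \<theta>)"
proof (rule prv_Neg_if_inconsistent[OF _ assms(1)])
  let ?H = "insert \<chi> (insert \<theta> T)"
  have "prv ?H (Iff \<theta> (Neg \<chi>))" using assms(2) by (rule prv_mono) auto
  moreover have "prv ?H \<theta>" "prv ?H \<chi>" by (auto intro: prv.Ax)
  ultimately have "prv ?H Bot" by (rule taut_MP3) auto
  then show "\<not> consistent (insert \<theta> T)" using assms(3) by (auto simp: consistent_def)
qed

lemma extensional_refuted:
  assumes "extensional T \<rho>" "sentence \<theta>" "prv T (Neg \<theta>)"
  shows "prv T (Iff (inst \<rho> \<theta>) (inst \<rho> Bot))"
proof -
  have "prv T (Iff \<theta> Bot)" using assms(3) by (rule taut_MP) auto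
  then show ?thesis using assms(1,2) by (simp add: extensional_def sentence_def)
qed

theorem (in R_extension) no_independent_extensional_formula:
  assumes "consistent T" "closedf 1 \<rho>" "extensional T \<rho>"
  shows "\<not> independent T \<rho>"
proof
  assume independent: "independent T \<rho>"
  obtain \<theta>\<^sub>1 where \<theta>\<^sub>1: "sentence \<theta>\<^sub>1" "prv T (Iff \<theta>\<^sub>1 (Neg (inst \<rho> \<theta>\<^sub>1)))"
    using diagonal_lemma[of "Neg \<rho>"] assms(2) by (auto simp: inst_def)
  then have "prv T (Neg \<theta>\<^sub>1)"
    by (rule fixed_point_refuted) (use independent \<theta>\<^sub>1(1) in \<open>auto simp: independent_def\<close>)
  from \<theta>\<^sub>1(2) this extensional_refuted[OF assms(3) \<theta>\<^sub>1(1) this]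
  have "prv T (inst \<rho> Bot)" by (rule taut_MP3) auto
  moreover obtain \<theta>\<^sub>2 where \<theta>\<^sub>2: "sentence \<theta>\<^sub>2" "prv T (Iff \<theta>\<^sub>2 (Neg (Neg (inst \<rho> \<theta>\<^sub>2))))"
    using diagonal_lemma[of "Neg (Neg \<rho>)"] assms(2) by (auto simp: inst_def)
  then have "prv T (Neg \<theta>\<^sub>2)"
    by (rule fixed_point_refuted) (use independent \<theta>\<^sub>2(1) in \<open>auto simp: independent_def\<close>)
  from \<theta>\<^sub>2(2) this extensional_refuted[OF assms(3) \<theta>\<^sub>2(1) this]
  have "prv T (Neg (inst \<rho> Bot))" by (rule taut_MP3) auto
  ultimately have "prv T Bot" by (rule taut_MP2) auto
  then show False using assms(1) by (simp add: consistent_def)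
qed

theorem mainTheorem3:
  fixes U :: "fm set"
  assumes "\<forall>\<psi>\<in>U. sentence \<psi>"
    and "\<forall>\<psi>\<in>R_axioms. prv U \<psi>"
    and "consistent U"
  shows "\<not> (\<exists>\<rho>. closedf 1 \<rho>
     \<and> (\<forall>\<phi>. sentence \<phi> \<and> consistent (insert \<phi> U) \<longrightarrow>
           consistent (insert (inst \<rho> \<phi>) (insert \<phi> U))
         \<and> consistent (insert (Neg (inst \<rho> \<phi>)) (insert \<phi> U)))
     \<and> (\<forall>\<phi> \<psi>. sentence \<phi> \<and> sentence \<psi> \<and> prv U (Iff \<phi> \<psi>) \<longrightarrow>
           prv U (Iff (inst \<rho> \<phi>) (inst \<rho> \<psi>))))"
proof -
  interpret R_extension U using assms(2) by unfold_locales
  show ?thesis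
    using no_independent_extensional_formula[OF assms(3)]
    unfolding independent_def extensional_def by blast
qed

end
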